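(* Let $\mathbb{F}$ be a field, $T$ a $(d,\mathbb{F})$-matrix-tree and $v$ a vertex of $T$. Let $T'=T-T_v$ be obtained by removing $v$ and all its descendants, and let $T''$ be obtained from $T$ by removing all leaves of $T_v$ labelled $L_C$. Then $M(A(T'))$ is isomorphic to $M(A(T''))$.
   Context: $T_v$ is the subtree of $T$ consisting of $v$ and all its descendants. The depth of a rooted tree is the number of edges on a longest root-to-leaf path. A $(d,\mathbb{F})$-matrix-tree is a rooted tree of depth at most $d$ with unary labels from $\{L_R,L_C\}\cup\{L_{i,\alpha}: i\in\{0,\dots,d\},\alpha\in\mathbb{F}\}$ such that: every node labelled $L_C$ is a leaf; every other non-root node is labelled $L_R$; each $L_C$-leaf at distance $k\le d$ from the root carries, for each $i\in\{0,\dots,k-1\}$, exactly one label $L_{i,\alpha}$. The matrix $A(T)$ has rows the $L_R$-nodes, columns the $L_C$-nodes, and entry at $(r,c)$ equal to $0$ if $r$ is not an ancestor of $c$, and equal to the unique $\alpha$ with $c$ labelled $L_{i,\alpha}$ if $r$ is an ancestor of $c$ at distance $i$ from the root. $M(B)$ denotes the column matroid of a matrix $B$. *)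

theory Defs
  imports Main
begin

datatype 'f label = LR | LC | Lab nat 'f

text \<open>A rooted tree is given by a finite node set V, a root r and a parent map par
  (the edges are {w, par w} for w in V - {r}); every node reaches the root.\<close>
definition rooted_tree :: "'v set \<Rightarrow> 'v \<Rightarrow> ('v \<Rightarrow> 'v) \<Rightarrow> bool" where
  "rooted_tree V r par \<longleftrightarrow> finite V \<and> r \<in> V \<and> (\<forall>w\<in>V - {r}. par w \<in> V)
     \<and> (\<forall>w\<in>V. \<exists>k. (par ^^ k) w = r)"

definition dist_root :: "'v \<Rightarrow> ('v \<Rightarrow> 'v) \<Rightarrow> 'v \<Rightarrow> nat" where
  "dist_root r par w = (LEAST k. (par ^^ k) w = r)"

definition is_leaf :: "'v set \<Rightarrow> 'v \<Rightarrow> ('v \<Rightarrow> 'v) \<Rightarrow> 'v \<Rightarrow> bool" where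
  "is_leaf V r par w \<longleftrightarrow> \<not> (\<exists>x\<in>V - {r}. par x = w)"

definition is_anc :: "'v \<Rightarrow> ('v \<Rightarrow> 'v) \<Rightarrow> 'v \<Rightarrow> 'v \<Rightarrow> bool" where
  "is_anc r par u w \<longleftrightarrow> (\<exists>k. 0 < k \<and> k \<le> dist_root r par w \<and> (par ^^ k) w = u)"

definition subtree :: "'v set \<Rightarrow> 'v \<Rightarrow> ('v \<Rightarrow> 'v) \<Rightarrow> 'v \<Rightarrow> 'v set" where
  "subtree V r par v = {w \<in> V. \<exists>k \<le> dist_root r par w. (par ^^ k) w = v}"

definition matrix_tree :: "nat \<Rightarrow> 'v set \<Rightarrow> 'v \<Rightarrow> ('v \<Rightarrow> 'v) \<Rightarrow> ('v \<Rightarrow> 'f label set) \<Rightarrow> bool" where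
  "matrix_tree d V r par lab \<longleftrightarrow>
     rooted_tree V r par
   \<and> (\<forall>w\<in>V. dist_root r par w \<le> d)
   \<and> (\<forall>w\<in>V. \<forall>i a. Lab i a \<in> lab w \<longrightarrow> i \<le> d)
   \<and> (\<forall>w\<in>V. LC \<in> lab w \<longrightarrow> is_leaf V r par w)
   \<and> (\<forall>w\<in>V - {r}. LC \<notin> lab w \<longrightarrow> LR \<in> lab w)
   \<and> (\<forall>w\<in>V. LC \<in> lab w \<longrightarrow> (\<forall>i < dist_root r par w. \<exists>!a. Lab i a \<in> lab w))"

text \<open>The matrix A(T) for the labelled tree on node set V (rows: L_R nodes, columns: L_C nodes).
  It is applied also to node sets of subtrees T', T'' (same root, parent map and labels).\<close>
definition mt_rows :: "'v set \<Rightarrow> ('v \<Rightarrow> 'f label set) \<Rightarrow> 'v set" where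
  "mt_rows V lab = {u \<in> V. LR \<in> lab u}"

definition mt_cols :: "'v set \<Rightarrow> ('v \<Rightarrow> 'f label set) \<Rightarrow> 'v set" where
  "mt_cols V lab = {c \<in> V. LC \<in> lab c}"

definition mt_entry :: "'v \<Rightarrow> ('v \<Rightarrow> 'v) \<Rightarrow> ('v \<Rightarrow> 'f::zero label set) \<Rightarrow> 'v \<Rightarrow> 'v \<Rightarrow> 'f" where
  "mt_entry r par lab u c =
     (if is_anc r par u c then (THE a. Lab (dist_root r par u) a \<in> lab c) else 0)"

definition col_matroid :: "'r set \<Rightarrow> 'c set \<Rightarrow> ('r \<Rightarrow> 'c \<Rightarrow> 'f::field) \<Rightarrow> 'c set \<times> ('c set \<Rightarrow> bool)" where
  "col_matroid R C B = (C, \<lambda>S. S \<subseteq> C \<and> finite S \<and>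
      (\<forall>g. (\<forall>u\<in>R. (\<Sum>c\<in>S. g c * B u c) = 0) \<longrightarrow> (\<forall>c\<in>S. g c = 0)))"

definition matroid_iso :: "'a set \<times> ('a set \<Rightarrow> bool) \<Rightarrow> 'b set \<times> ('b set \<Rightarrow> bool) \<Rightarrow> bool" where
  "matroid_iso M N \<longleftrightarrow> (\<exists>f. bij_betw f (fst M) (fst N) \<and>
      (\<forall>S \<subseteq> fst M. snd M S \<longleftrightarrow> snd N (f ` S)))"

definition mt_matroid :: "'v set \<Rightarrow> 'v \<Rightarrow> ('v \<Rightarrow> 'v) \<Rightarrow> ('v \<Rightarrow> 'f::field label set) \<Rightarrow> 'v set \<times> ('v set \<Rightarrow> bool)" where
  "mt_matroid V r par lab = col_matroid (mt_rows V lab) (mt_cols V lab) (mt_entry r par lab)"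

end

theory Submission
  imports Defs
begin

text \<open>The two matroids are in fact equal. Both trees keep exactly the same \<open>L\<^sub>C\<close>-leaves,
  namely those outside \<open>T\<^sub>v\<close>, and \<open>T''\<close> only has the extra rows of the \<open>L\<^sub>R\<close>-nodes of \<open>T\<^sub>v\<close>.
  Such a node is an ancestor of no remaining column, so its row of \<open>A(T'')\<close> vanishes,
  and zero rows impose no linear relation on the columns.\<close>

lemma matroid_iso_refl: "matroid_iso M M"
  unfolding matroid_iso_def by (rule exI[of _ id]) auto

lemma col_matroid_zero_rows:
  assumes "R \<subseteq> R'" and zero: "\<And>u c. u \<in> R' - R \<Longrightarrow> c \<in> C \<Longrightarrow> B u c = 0"
  shows "col_matroid R' C B = col_matroid R C B"
proof -
  have "(\<forall>u\<in>R'. (\<Sum>c\<in>S. g c * B u c) = 0) \<longleftrightarrow> (\<forall>u\<in>R. (\<Sum>c\<in>S. g c * B u c) = 0)"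
    if "S \<subseteq> C" for S g
  proof -
    have "(\<Sum>c\<in>S. g c * B u c) = 0" if "u \<in> R' - R" for u
      using zero[OF that] \<open>S \<subseteq> C\<close> by (simp add: subset_iff)
    then show ?thesis using assms(1) by blast
  qed
  then show ?thesis
    unfolding col_matroid_def by (intro arg_cong[where f = "Pair C"] ext conj_cong refl) simp_all
qed

lemma funpow_dist_root:
  assumes "rooted_tree V r par" and "w \<in> V"
  shows "(par ^^ dist_root r par w) w = r"
proof -
  have "\<exists>k. (par ^^ k) w = r" using assms unfolding rooted_tree_def by blast
  then show ?thesis unfolding dist_root_def by (rule LeastI_ex)
qed

lemma subtree_closed_under_descendants:
  assumes rt: "rooted_tree V r par" and "c \<in> V"
    and anc: "is_anc r par u c" and u: "u \<in> subtree V r par v"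
  shows "c \<in> subtree V r par v"
proof -
  obtain k where k: "k \<le> dist_root r par c" "(par ^^ k) c = u"
    using anc unfolding is_anc_def by blast
  obtain j where j: "j \<le> dist_root r par u" "(par ^^ j) u = v"
    using u unfolding subtree_def by blast
  have "(par ^^ (dist_root r par c - k)) u = r"
    using funpow_dist_root[OF rt \<open>c \<in> V\<close>] k
    by (metis funpow_add le_add_diff_inverse2 comp_apply)
  then have "dist_root r par u \<le> dist_root r par c - k"
    unfolding dist_root_def by (rule Least_le)
  then have "j + k \<le> dist_root r par c" using j(1) k(1) by linarith
  moreover have "(par ^^ (j + k)) c = v" using j(2) k(2) by (simp add: funpow_add)
  ultimately show ?thesis using \<open>c \<in> V\<close> unfolding subtree_def by blast
qed

theorem lemma14:
  fixes d :: nat and V :: "'v set" and r v :: 'v and par :: "'v \<Rightarrow> 'v"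
    and lab :: "'v \<Rightarrow> ('f::field) label set"
  assumes "matrix_tree d V r par lab" and "v \<in> V"
  shows "matroid_iso
           (mt_matroid (V - subtree V r par v) r par lab)
           (mt_matroid (V - {w \<in> subtree V r par v. is_leaf V r par w \<and> LC \<in> lab w}) r par lab)"
proof -
  let ?T = "subtree V r par v"
  let ?V' = "V - ?T"
  let ?V'' = "V - {w \<in> ?T. is_leaf V r par w \<and> LC \<in> lab w}"
  have rt: "rooted_tree V r par"
    and leaf: "\<And>w. w \<in> V \<Longrightarrow> LC \<in> lab w \<Longrightarrow> is_leaf V r par w"
    using assms(1) unfolding matrix_tree_def by blast+
  have cols: "mt_cols ?V'' lab = mt_cols ?V' lab"
    unfolding mt_cols_def using leaf by auto
  have "mt_rows ?V' lab \<subseteq> mt_rows ?V'' lab"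
    unfolding mt_rows_def by auto
  moreover have "mt_entry r par lab u c = 0"
    if "u \<in> mt_rows ?V'' lab - mt_rows ?V' lab" "c \<in> mt_cols ?V' lab" for u c
  proof -
    have "\<not> is_anc r par u c"
      using that subtree_closed_under_descendants[OF rt]
      unfolding mt_rows_def mt_cols_def by blast
    then show ?thesis unfolding mt_entry_def by simp
  qed
  ultimately have "mt_matroid ?V'' r par lab = mt_matroid ?V' r par lab"
    unfolding mt_matroid_def cols by (rule col_matroid_zero_rows)
  then show ?thesis by (simp add: matroid_iso_refl)
qed

end
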